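(* Let $\lambda$ be a partition with at most $n$ parts, let $\bar\lambda\in\mathbb{N}^n$ be obtained from $\lambda$ by replacing every part equal to $1$ by $0$, let $\nu\in S_n(\bar\lambda)$ be a rearrangement of $\bar\lambda$, and let $S\subseteq\{1,\dots,n\}$ with $\#S=\ell(\lambda)$ (the number of nonzero parts of $\lambda$). Then $$\sum_{\substack{\mu\in S_n(\lambda)\\ \mathrm{Supp}(\mu)=S}}a^\nu_\mu\big|_{q=1}=1.$$
   Context: $S_n(\lambda)$ is the set of rearrangements of $\lambda$, and $\mathrm{Supp}(\mu)=\{i:\mu_i>0\}$. Generalized two-line queues and $a^\nu_\mu\in\mathbb{Q}(q,t)$. For $\nu,\mu\in\mathbb{N}^n$ (top row $\nu$, bottom row $\mu$), require: $\nu$ has no part equal to $1$; $\#\{i:\mu_i=j\}=\#\{i:\nu_i=j\}$ for every $j>1$; and for each $i$, $\mu_i=0$ or $\nu_i\le\mu_i$. Place a ball labeled $\nu_i$ in column $i$ of the top row when $\nu_i>0$, and a ball labeled $\mu_i$ in column $i$ of the bottom row when $\mu_i>0$. A generalized two-line queue in $\mathcal{Q}^\nu_\mu$ is a bijection pairing each top ball with a bottom ball of the same label, such that whenever a top ball of label $a$ lies directly above a bottom ball of label $a$ they are paired to each other (trivial pairing); each pairing is drawn as the shortest strand going straight down or left to right, wrapping around cyclically (columns mod $n$). Weights: process top balls in decreasing order of label, ties broken right to left. For a nontrivial pairing $p$ joining a top ball of label $a$ in column $j$ to a bottom ball in column $j'$, the free balls for $p$ are the bottom-row balls not matched before $p$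 (excluding bottom balls of label $a$ that are trivially paired); $\mathrm{free}(p)$ is their number, and $\mathrm{skipped}(p)$ is the number of free balls in columns $j+1,\dots,j'-1$ (mod $n$). Set $\mathrm{wt}(p)=\frac{(1-t)t^{\mathrm{skipped}(p)}}{1-q^{a-1}t^{\mathrm{free}(p)}}q^{a-1}$ if $j'<j$ and $\frac{(1-t)t^{\mathrm{skipped}(p)}}{1-q^{a-1}t^{\mathrm{free}(p)}}$ if $j'>j$. Then $a^\nu_\mu=\sum_{Q\in\mathcal{Q}^\nu_\mu}\prod_{p\text{ nontrivial}}\mathrm{wt}(p)$ (zero if $\mathcal{Q}^\nu_\mu$ is empty), and $a^\nu_\mu|_{q=1}$ is its specialization at $q=1$. *)

theory Defs
  imports Main "HOL-Library.FuncSet" "HOL-Library.Multiset"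
    "HOL-Computational_Algebra.Polynomial" "HOL-Computational_Algebra.Fraction_Field"
begin

(* Columns are indexed 0..n-1 (the paper uses 1..n); vectors in N^n are nat lists of length n. *)

definition rearrangements :: "nat list \<Rightarrow> nat list set" where
  "rearrangements lam = {mu. mset mu = mset lam}"

definition supp :: "nat list \<Rightarrow> nat set" where
  "supp mu = {i. i < length mu \<and> mu ! i > 0}"

definition valid_2lq :: "nat list \<Rightarrow> nat list \<Rightarrow> bool" where
  "valid_2lq nu mu \<longleftrightarrow> length nu = length mu \<and> 1 \<notin> set nu
     \<and> (\<forall>j>1. card {i. i < length mu \<and> mu ! i = j} = card {i. i < length nu \<and> nu ! i = j})
     \<and> (\<forall>i<length nu. mu ! i = 0 \<or> nu ! i \<le> mu ! i)"

definition top_cols :: "nat list \<Rightarrow> nat set" where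
  "top_cols nu = {i. i < length nu \<and> nu ! i > 0}"

(* generalized two-line queues: pairings sigma (top column \<mapsto> bottom column) *)
definition queues :: "nat list \<Rightarrow> nat list \<Rightarrow> (nat \<Rightarrow> nat) set" where
  "queues nu mu = {\<sigma> \<in> top_cols nu \<rightarrow>\<^sub>E {..<length mu}.
      inj_on \<sigma> (top_cols nu)
      \<and> (\<forall>i\<in>top_cols nu. mu ! (\<sigma> i) = nu ! i)
      \<and> (\<forall>i\<in>top_cols nu. nu ! i = mu ! i \<longrightarrow> \<sigma> i = i)}"

definition before :: "nat list \<Rightarrow> nat \<Rightarrow> nat \<Rightarrow> bool" where
  "before nu i j \<longleftrightarrow> nu ! i > nu ! j \<or> (nu ! i = nu ! j \<and> i > j)"

definition free_balls :: "nat list \<Rightarrow> nat list \<Rightarrow> (nat \<Rightarrow> nat) \<Rightarrow> nat \<Rightarrow> nat set" where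
  "free_balls nu mu \<sigma> j = {b. b < length mu \<and> mu ! b > 0
      \<and> b \<notin> \<sigma> ` {i \<in> top_cols nu. before nu i j}
      \<and> \<not> (mu ! b = nu ! j \<and> nu ! b = mu ! b)}"

definition cyc_between :: "nat \<Rightarrow> nat \<Rightarrow> nat \<Rightarrow> nat set" where
  "cyc_between n j j' = {(j + k) mod n | k. 0 < k \<and> k < (j' + n - j) mod n}"

definition skipped :: "nat list \<Rightarrow> nat list \<Rightarrow> (nat \<Rightarrow> nat) \<Rightarrow> nat \<Rightarrow> nat" where
  "skipped nu mu \<sigma> j = card (free_balls nu mu \<sigma> j \<inter> cyc_between (length mu) j (\<sigma> j))"

definition pair_wt :: "'k::field \<Rightarrow> 'k \<Rightarrow> nat list \<Rightarrow> nat list \<Rightarrow> (nat \<Rightarrow> nat) \<Rightarrow> nat \<Rightarrow> 'k" where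
  "pair_wt q t nu mu \<sigma> j =
     (1 - t) * t ^ skipped nu mu \<sigma> j
       / (1 - q ^ (nu ! j - 1) * t ^ card (free_balls nu mu \<sigma> j))
     * (if \<sigma> j < j then q ^ (nu ! j - 1) else 1)"

definition queue_wt :: "'k::field \<Rightarrow> 'k \<Rightarrow> nat list \<Rightarrow> nat list \<Rightarrow> (nat \<Rightarrow> nat) \<Rightarrow> 'k" where
  "queue_wt q t nu mu \<sigma> = (\<Prod>j\<in>{j \<in> top_cols nu. \<sigma> j \<noteq> j}. pair_wt q t nu mu \<sigma> j)"

definition a_coef :: "'k::field \<Rightarrow> 'k \<Rightarrow> nat list \<Rightarrow> nat list \<Rightarrow> 'k" where
  "a_coef q t nu mu = (if valid_2lq nu mu then (\<Sum>\<sigma>\<in>queues nu mu. queue_wt q t nu mu \<sigma>) else 0)"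

definition tvar :: "rat poly fract" where
  "tvar = Fract [:0, 1:] 1"

definition a_coef_q1 :: "nat list \<Rightarrow> nat list \<Rightarrow> rat poly fract" where
  "a_coef_q1 nu mu = a_coef 1 tvar nu mu"

end

theory Submission
  imports Defs "HOL-Combinatorics.Multiset_Permutations"
begin

text \<open>At \<open>q = 1\<close> a nontrivial pairing from column \<open>j\<close> with \<open>f\<close> free balls has weight
  \<open>(1 - t) t\<^sup>s / (1 - t\<^sup>f)\<close>, where \<open>s\<close> counts the free balls skipped cyclically; as the
  target runs over the free balls, \<open>s\<close> takes each value \<open>0, \<dots>, f - 1\<close> once, so these weights
  sum to \<open>1\<close>. Summing over all bottom rows \<open>\<mu>\<close> with support \<open>S\<close> and all their queues amounts
  to choosing, top ball by top ball in processing order, either the forced trivial pairing or one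
  of the free balls: \<open>\<mu>\<close> is recovered from these choices. Since \<open>S\<close> has at least as many
  columns as there are top balls, a free ball is always available, and the total weight is an
  iterated sum of terms each summing to \<open>1\<close>.\<close>

section \<open>Cyclic geometric sums\<close>

lemma tvar_power: "tvar ^ k = Fract (monom 1 k) 1"
  by (induction k) (simp_all add: tvar_def One_fract_def monom_Suc mult.commute)

lemma tvar_power_eq_1_iff: "tvar ^ k = 1 \<longleftrightarrow> k = 0"
proof
  assume "tvar ^ k = 1"
  then have "monom (1::rat) k = 1"
    by (simp add: tvar_power One_fract_def eq_fract)
  then have "degree (monom (1::rat) k) = 0"
    by simp
  then show "k = 0"
    by (simp add: degree_monom_eq)
qed simp

lemma mod_add_eq_iff_eq_cyclic_distance:
  fixes j k x n :: nat
  assumes "j < n" "x < n" "k < n"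
  shows "(j + k) mod n = x \<longleftrightarrow> k = (x + n - j) mod n"
  using assms by (auto simp: mod_if le_diff_conv2 less_diff_conv2)

lemma mem_cyc_between_iff:
  assumes "j < n" "x < n"
  shows "x \<in> cyc_between n j c \<longleftrightarrow> 0 < (x + n - j) mod n \<and> (x + n - j) mod n < (c + n - j) mod n"
    (is "_ \<longleftrightarrow> 0 < ?d \<and> ?d < ?m")
proof
  assume "x \<in> cyc_between n j c"
  then obtain k where k: "x = (j + k) mod n" "0 < k" "k < ?m"
    unfolding cyc_between_def by blast
  moreover have "?m < n"
    using assms(1) by simp
  ultimately have "k = ?d"
    using mod_add_eq_iff_eq_cyclic_distance[OF assms, of k] by simp
  with k show "0 < ?d \<and> ?d < ?m"
    by simp
next
  assume "0 < ?d \<and> ?d < ?m"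
  moreover have "x = (j + ?d) mod n"
    using mod_add_eq_iff_eq_cyclic_distance[OF assms, of ?d] assms(1) by simp
  ultimately show "x \<in> cyc_between n j c"
    unfolding cyc_between_def by blast
qed

lemma bij_betw_card_less:
  fixes d :: "'a \<Rightarrow> 'b::linorder"
  assumes "finite F" "inj_on d F"
  shows "bij_betw (\<lambda>c. card {x \<in> F. d x < d c}) F {..<card F}"
proof -
  let ?r = "\<lambda>c. card {x \<in> F. d x < d c}"
  have less: "?r c < ?r c'" if "c \<in> F" "c' \<in> F" "d c < d c'" for c c'
  proof (rule psubset_card_mono)
    show "{x \<in> F. d x < d c} \<subset> {x \<in> F. d x < d c'}"
      using that by auto
  qed (use assms in simp)
  have "inj_on ?r F"
  proof (rule inj_onI, rule ccontr)
    fix c c' assume c: "c \<in> F" "c' \<in> F" "?r c = ?r c'" "c \<noteq> c'"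
    then have "d c \<noteq> d c'"
      using inj_onD[OF assms(2)] by blast
    then show False
      using less[of c c'] less[of c' c] c by (cases rule: linorder_cases[of "d c" "d c'"]) auto
  qed
  moreover have "?r ` F \<subseteq> {..<card F}"
  proof (intro image_subsetI, simp)
    fix c assume "c \<in> F"
    then show "card {x \<in> F. d x < d c} < card F"
      using assms(1) by (intro psubset_card_mono) auto
  qed
  ultimately show ?thesis
    by (simp add: bij_betw_def card_subset_eq card_image)
qed

lemma inj_on_cyclic_distance:
  fixes j n :: nat
  assumes "j < n"
  shows "inj_on (\<lambda>x. (x + n - j) mod n) {..<n}"
proof (rule inj_onI)
  fix x y assume "x \<in> {..<n}" "y \<in> {..<n}" and "(x + n - j) mod n = (y + n - j) mod n"
  then have "(j + (y + n - j) mod n) mod n = x" "(j + (y + n - j) mod n) mod n = y"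
    using mod_add_eq_iff_eq_cyclic_distance[of j n _ "(y + n - j) mod n"] assms by auto
  then show "x = y"
    by simp
qed

lemma bij_betw_card_cyc_between:
  assumes F: "F \<subseteq> {..<n}" and j: "j < n" "j \<notin> F"
  shows "bij_betw (\<lambda>c. card (F \<inter> cyc_between n j c)) F {..<card F}"
proof -
  define d where "d x = (x + n - j) mod n" for x
  have "x \<in> cyc_between n j c \<longleftrightarrow> d x < d c" if "x \<in> F" for x c
  proof -
    have "x < n" "x \<noteq> j"
      using that F j by auto
    then have "0 < d x"
      using mod_add_eq_iff_eq_cyclic_distance[OF j(1), of x 0] j(1) unfolding d_def by auto
    then show ?thesis
      using mem_cyc_between_iff[OF j(1) \<open>x < n\<close>] unfolding d_def by auto
  qed
  then have "F \<inter> cyc_between n j c = {x \<in> F. d x < d c}" for c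
    by auto
  moreover have "inj_on d F"
    unfolding d_def using inj_on_subset[OF inj_on_cyclic_distance[OF j(1)] F] .
  ultimately show ?thesis
    using bij_betw_card_less[OF finite_subset[OF F finite_lessThan]] by simp
qed

lemma sum_cyclic_geometric_weights:
  fixes t :: "'a::field"
  assumes "F \<subseteq> {..<n}" "j < n" "j \<notin> F" and t: "t ^ card F \<noteq> 1"
  shows "(\<Sum>c\<in>F. (1 - t) * t ^ card (F \<inter> cyc_between n j c) / (1 - t ^ card F)) = 1"
proof -
  have "t \<noteq> 1"
    using t by auto
  have "(\<Sum>c\<in>F. t ^ card (F \<inter> cyc_between n j c)) = (\<Sum>k<card F. t ^ k)"
    using bij_betw_card_cyc_between[OF assms(1-3)] by (rule sum.reindex_bij_betw)
  also have "\<dots> = (1 - t ^ card F) / (1 - t)"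
    using \<open>t \<noteq> 1\<close> by (simp add: sum_gp_strict)
  finally have geometric: "(\<Sum>c\<in>F. t ^ card (F \<inter> cyc_between n j c)) = (1 - t ^ card F) / (1 - t)" .
  have "(\<Sum>c\<in>F. (1 - t) * t ^ card (F \<inter> cyc_between n j c) / (1 - t ^ card F))
      = (1 - t) / (1 - t ^ card F) * (\<Sum>c\<in>F. t ^ card (F \<inter> cyc_between n j c))"
    by (simp add: sum_distrib_left sum_divide_distrib)
  also have "\<dots> = 1"
    using t \<open>t \<noteq> 1\<close> by (simp add: geometric)
  finally show ?thesis .
qed

section \<open>Sequential choices\<close>

definition consistent_choices ::
    "(('a \<Rightarrow> 'b) \<Rightarrow> 'a \<Rightarrow> 'b set) \<Rightarrow> 'a set \<Rightarrow> 'b set \<Rightarrow> ('a \<Rightarrow> 'b) set" where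
  "consistent_choices ch A B = {\<sigma> \<in> A \<rightarrow>\<^sub>E B. \<forall>j\<in>A. \<sigma> j \<in> ch \<sigma> j}"

lemma finite_consistent_choices: "finite A \<Longrightarrow> finite B \<Longrightarrow> finite (consistent_choices ch A B)"
  unfolding consistent_choices_def by (simp add: finite_PiE)

lemma bij_betw_consistent_choices_remove:
  assumes m: "m \<in> A" and "\<And>\<sigma>. ch \<sigma> m \<subseteq> B"
    and ch_upd: "\<And>\<rho> c j. j \<in> A \<Longrightarrow> ch (\<rho>(m := c)) j = ch \<rho> j"
  shows "bij_betw (\<lambda>(\<sigma>, c). \<sigma>(m := c))
    (SIGMA \<sigma>:consistent_choices ch (A - {m}) B. ch \<sigma> m) (consistent_choices ch A B)"
proof (rule bij_betw_byWitness[where f' = "\<lambda>\<sigma>. (\<sigma>(m := undefined), \<sigma> m)"])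
  show "\<forall>p\<in>SIGMA \<sigma>:consistent_choices ch (A - {m}) B. ch \<sigma> m.
      (\<lambda>\<sigma>. (\<sigma>(m := undefined), \<sigma> m)) ((\<lambda>(\<sigma>, c). \<sigma>(m := c)) p) = p"
    by (auto simp: consistent_choices_def PiE_def extensional_def fun_eq_iff)
  show "\<forall>\<sigma>\<in>consistent_choices ch A B.
      (\<lambda>(\<sigma>, c). \<sigma>(m := c)) ((\<lambda>\<sigma>. (\<sigma>(m := undefined), \<sigma> m)) \<sigma>) = \<sigma>"
    by auto
  show "(\<lambda>(\<sigma>, c). \<sigma>(m := c)) ` (SIGMA \<sigma>:consistent_choices ch (A - {m}) B. ch \<sigma> m)
      \<subseteq> consistent_choices ch A B"
  proof clarify
    fix \<sigma> c assume \<sigma>: "\<sigma> \<in> consistent_choices ch (A - {m}) B" and c: "c \<in> ch \<sigma> m"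
    have "\<sigma>(m := c) \<in> insert m (A - {m}) \<rightarrow>\<^sub>E B"
      using \<sigma> c assms(2) by (intro PiE_fun_upd) (auto simp: consistent_choices_def)
    moreover have "\<forall>j\<in>A. (\<sigma>(m := c)) j \<in> ch (\<sigma>(m := c)) j"
      using \<sigma> c m by (auto simp: consistent_choices_def ch_upd)
    ultimately show "\<sigma>(m := c) \<in> consistent_choices ch A B"
      using m by (simp add: consistent_choices_def insert_absorb)
  qed
  show "(\<lambda>\<sigma>. (\<sigma>(m := undefined), \<sigma> m)) ` consistent_choices ch A B
      \<subseteq> (SIGMA \<sigma>:consistent_choices ch (A - {m}) B. ch \<sigma> m)"
  proof (rule image_subsetI)
    fix \<sigma> assume \<sigma>: "\<sigma> \<in> consistent_choices ch A B"
    have "\<sigma>(m := undefined) \<in> A - {m} \<rightarrow>\<^sub>E B"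
      using \<sigma> m by (intro fun_upd_in_PiE) (auto simp: consistent_choices_def insert_absorb)
    moreover have "\<forall>j\<in>A. \<sigma> j \<in> ch (\<sigma>(m := undefined)) j"
      using \<sigma> by (auto simp: consistent_choices_def ch_upd)
    ultimately show "(\<sigma>(m := undefined), \<sigma> m) \<in> (SIGMA \<sigma>:consistent_choices ch (A - {m}) B. ch \<sigma> m)"
      using m by (simp add: consistent_choices_def)
  qed
qed

text \<open>The hypotheses \<open>ch_upd\<close> and \<open>w_upd\<close> say that the options and weights at \<open>j\<close> depend
  only on the choices made at elements preceding \<open>j\<close>. The proof sums out the choice at a
  maximal element.\<close>

lemma sum_prod_consistent_choices:
  fixes prec :: "'a \<Rightarrow> 'a \<Rightarrow> bool"
    and ch :: "('a \<Rightarrow> 'b) \<Rightarrow> 'a \<Rightarrow> 'b set"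
    and w :: "('a \<Rightarrow> 'b) \<Rightarrow> 'a \<Rightarrow> 'b \<Rightarrow> 'c::comm_semiring_1"
  assumes "finite T" "finite B"
    and "transp_on T prec" "asymp_on T prec"
    and "\<And>\<rho> j. j \<in> T \<Longrightarrow> ch \<rho> j \<subseteq> B"
    and ch_upd: "\<And>\<rho> i c j. \<not> prec i j \<Longrightarrow> ch (\<rho>(i := c)) j = ch \<rho> j"
    and w_upd: "\<And>\<rho> i c j. \<not> prec i j \<Longrightarrow> w (\<rho>(i := c)) j = w \<rho> j"
    and "\<And>\<rho> j. j \<in> T \<Longrightarrow> (\<And>i. i \<in> T \<Longrightarrow> prec i j \<Longrightarrow> \<rho> i \<in> ch \<rho> i) \<Longrightarrow>
      (\<Sum>c\<in>ch \<rho> j. w \<rho> j c) = 1"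
  shows "(\<Sum>\<sigma>\<in>consistent_choices ch T B. \<Prod>j\<in>T. w \<sigma> j (\<sigma> j)) = 1"
  using assms(1,3-5,8)
proof (induction T rule: finite_remove_induct)
  case (remove A)
  obtain m where m: "m \<in> A" and last: "\<And>j. j \<in> A \<Longrightarrow> \<not> prec m j"
    using Finite_Set.bex_max_element[OF remove.hyps(1) remove.prems(2,1) remove.hyps(2)]
      asymp_onD[OF remove.prems(2)] by metis
  let ?A = "A - {m}"
  have IH: "(\<Sum>\<sigma>\<in>consistent_choices ch ?A B. \<Prod>j\<in>?A. w \<sigma> j (\<sigma> j)) = 1"
  proof (rule remove.IH[OF m])
    show "transp_on ?A prec" "asymp_on ?A prec"
      using remove.prems(1,2) by (auto intro: transp_on_subset asymp_on_subset)
    show "ch \<rho> j \<subseteq> B" if "j \<in> ?A" for \<rho> j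
      using remove.prems(3) that by blast
    show "(\<Sum>c\<in>ch \<rho> j. w \<rho> j c) = 1"
      if "j \<in> ?A" "\<And>i. i \<in> ?A \<Longrightarrow> prec i j \<Longrightarrow> \<rho> i \<in> ch \<rho> i" for \<rho> j
      using remove.prems(4) that last by blast
  qed
  have bij: "bij_betw (\<lambda>(\<sigma>, c). \<sigma>(m := c))
      (SIGMA \<sigma>:consistent_choices ch ?A B. ch \<sigma> m) (consistent_choices ch A B)"
    using remove.prems(3)[OF m] by (intro bij_betw_consistent_choices_remove) (auto simp: m last ch_upd)
  have prod_upd: "(\<Prod>j\<in>A. w (\<sigma>(m := c)) j ((\<sigma>(m := c)) j)) = (\<Prod>j\<in>?A. w \<sigma> j (\<sigma> j)) * w \<sigma> m c"
    for \<sigma> c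
  proof -
    have "(\<Prod>j\<in>?A. w (\<sigma>(m := c)) j ((\<sigma>(m := c)) j)) = (\<Prod>j\<in>?A. w \<sigma> j (\<sigma> j))"
      using last by (intro prod.cong) (auto simp: w_upd)
    then show ?thesis
      using m remove.hyps(1) last by (simp add: prod.remove w_upd mult.commute)
  qed
  have last_sum: "(\<Sum>c\<in>ch \<sigma> m. w \<sigma> m c) = 1" if "\<sigma> \<in> consistent_choices ch ?A B" for \<sigma>
    by (rule remove.prems(4)[OF m]) (use that last[OF m] in \<open>auto simp: consistent_choices_def\<close>)
  have "finite (ch \<sigma> m)" for \<sigma>
    using remove.prems(3)[OF m] assms(2) finite_subset by blast
  then have "(\<Sum>\<sigma>\<in>consistent_choices ch A B. \<Prod>j\<in>A. w \<sigma> j (\<sigma> j))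
      = (\<Sum>\<sigma>\<in>consistent_choices ch ?A B. (\<Prod>j\<in>?A. w \<sigma> j (\<sigma> j)) * (\<Sum>c\<in>ch \<sigma> m. w \<sigma> m c))"
    using remove.hyps(1) assms(2)
    by (simp add: sum.reindex_bij_betw[OF bij, symmetric] sum.Sigma case_prod_unfold prod_upd
        finite_consistent_choices sum_distrib_left del: fun_upd_apply)
  also have "\<dots> = 1"
    using IH last_sum by simp
  finally show ?case .
qed (simp add: consistent_choices_def)

section \<open>Counting labels in a row\<close>

lemma count_mset_eq_card: "count (mset xs) x = card {i. i < length xs \<and> xs ! i = x}"
proof -
  have "card {i. i < length xs \<and> xs ! i = x} = length (filter (\<lambda>y. y = x) xs)"
    by (simp add: length_filter_conv_card)
  also have "\<dots> = size {#y \<in># mset xs. y = x#}"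
    by (metis mset_filter size_mset)
  also have "\<dots> = count (mset xs) x"
    by (simp add: filter_eq_replicate_mset)
  finally show ?thesis ..
qed

lemma card_supp: "card (supp xs) = length xs - count (mset xs) 0"
proof -
  have "supp xs = {..<length xs} - {i. i < length xs \<and> xs ! i = 0}"
    by (auto simp: supp_def)
  then show ?thesis
    using card_Diff_subset[of "{i. i < length xs \<and> xs ! i = 0}" "{..<length xs}"]
    by (auto simp: count_mset_eq_card)
qed

lemma count_mset_collapse_ones:
  fixes xs :: "nat list"
  shows "count (mset (map (\<lambda>x. if x = 1 then 0 else x) xs)) y =
     (if y = 0 then count (mset xs) 0 + count (mset xs) 1 else if y = 1 then 0 else count (mset xs) y)"
  by (induction xs) auto

lemma mset_eq_by_card_supp_and_large_counts:
  fixes xs ys :: "nat list"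
  assumes "length xs = length ys" "card (supp xs) = card (supp ys)"
    and large: "\<And>x. 1 < x \<Longrightarrow> count (mset xs) x = count (mset ys) x"
  shows "mset xs = mset ys"
proof -
  have size_split: "size M = count M 0 + count M 1 + size {#x \<in># M. 1 < x#}" for M :: "nat multiset"
  proof -
    have "M = replicate_mset (count M 0) 0 + replicate_mset (count M 1) 1 + {#x \<in># M. 1 < x#}"
    proof (rule multiset_eqI)
      fix x show "count M x = count (replicate_mset (count M 0) 0 + replicate_mset (count M 1) 1 + {#x \<in># M. 1 < x#}) x"
        by (cases x rule: linorder_cases[of _ 1]) simp_all
    qed
    then show ?thesis
      by (metis size_replicate_mset size_union)
  qed
  have zeros: "count (mset xs) 0 = count (mset ys) 0"
    using assms(1,2) count_le_length[of xs 0] count_le_length[of ys 0]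
    by (simp add: card_supp count_mset)
  moreover have "{#x \<in># mset xs. 1 < x#} = {#x \<in># mset ys. 1 < x#}"
    by (rule multiset_eqI) (simp add: large)
  ultimately have ones: "count (mset xs) 1 = count (mset ys) 1"
    using size_split[of "mset xs"] size_split[of "mset ys"] assms(1) by simp
  show ?thesis
  proof (rule multiset_eqI)
    fix x show "count (mset xs) x = count (mset ys) x"
      using zeros ones large by (cases x rule: linorder_cases[of _ 1]) auto
  qed
qed

lemma before_trans: "before nu i j \<Longrightarrow> before nu j k \<Longrightarrow> before nu i k"
  by (auto simp: before_def)

lemma before_irrefl: "\<not> before nu i i"
  by (simp add: before_def)

lemma before_cases: "i \<noteq> j \<Longrightarrow> before nu i j \<or> before nu j i"
  by (auto simp: before_def)

lemma before_imp_le: "before nu i j \<Longrightarrow> nu ! j \<le> nu ! i"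
  by (auto simp: before_def)

lemma top_cols_eq_supp: "top_cols = supp"
  by (simp add: fun_eq_iff top_cols_def supp_def)

section \<open>Queues as sequences of choices\<close>

text \<open>Top balls are processed in the order \<^const>\<open>before\<close>, and \<open>matched_cols \<sigma> j\<close> are the bottom
  columns used before column \<open>j\<close>. If \<open>j \<in> S\<close> is still unused, the pairing at \<open>j\<close> is forced to be
  trivial (a larger label below \<open>j\<close> would already have been matched); otherwise the ball may go
  to any column of \<open>free_cols \<sigma> j\<close>, which are exactly the free balls of the pairing. The bottom
  row is read off from \<open>\<sigma>\<close> by \<open>bottom_row\<close>, and \<open>step_wt\<close> is the weight of the pairing at
  \<open>q = 1\<close>, expressed through data fixed before \<open>j\<close> is processed.\<close>

locale queue_support =
  fixes nu :: "nat list" and S :: "nat set"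
  assumes support_subset: "S \<subseteq> {..<length nu}"
    and card_top_cols_le: "card (top_cols nu) \<le> card S"
    and one_notin_top_row: "1 \<notin> set nu"
begin

abbreviation T :: "nat set" where
  "T \<equiv> top_cols nu"

definition matched_cols :: "(nat \<Rightarrow> nat) \<Rightarrow> nat \<Rightarrow> nat set" where
  "matched_cols \<sigma> j = \<sigma> ` {i \<in> T. before nu i j}"

definition forced :: "(nat \<Rightarrow> nat) \<Rightarrow> nat \<Rightarrow> bool" where
  "forced \<sigma> j \<longleftrightarrow> j \<in> S \<and> j \<notin> matched_cols \<sigma> j"

definition free_cols :: "(nat \<Rightarrow> nat) \<Rightarrow> nat \<Rightarrow> nat set" where
  "free_cols \<sigma> j = {b \<in> S - matched_cols \<sigma> j. nu ! b < nu ! j}"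

definition choices :: "(nat \<Rightarrow> nat) \<Rightarrow> nat \<Rightarrow> nat set" where
  "choices \<sigma> j = (if forced \<sigma> j then {j} else free_cols \<sigma> j)"

definition step_wt :: "(nat \<Rightarrow> nat) \<Rightarrow> nat \<Rightarrow> nat \<Rightarrow> rat poly fract" where
  "step_wt \<sigma> j c = (if forced \<sigma> j then 1 else
     (1 - tvar) * tvar ^ card (free_cols \<sigma> j \<inter> cyc_between (length nu) j c)
       / (1 - tvar ^ card (free_cols \<sigma> j)))"

definition sequential_queues :: "(nat \<Rightarrow> nat) set" where
  "sequential_queues = consistent_choices choices T {..<length nu}"

definition bottom_row :: "(nat \<Rightarrow> nat) \<Rightarrow> nat list" where
  "bottom_row \<sigma> = map (\<lambda>b. if b \<in> \<sigma> ` T then nu ! inv_into T \<sigma> b else if b \<in> S then 1 else 0)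
     [0..<length nu]"

lemma T_subset: "T \<subseteq> {..<length nu}"
  by (auto simp: top_cols_def)

lemma finite_T: "finite T"
  using T_subset finite_subset by blast

lemma finite_S: "finite S"
  using support_subset finite_subset by blast

lemma mem_T_iff: "i \<in> T \<longleftrightarrow> i < length nu \<and> 0 < nu ! i"
  by (simp add: top_cols_def)

lemma top_label_ge_2:
  assumes "i \<in> T"
  shows "2 \<le> nu ! i"
proof -
  have "i < length nu" "0 < nu ! i"
    using assms by (simp_all add: mem_T_iff)
  moreover have "nu ! i \<noteq> 1"
    using one_notin_top_row nth_mem[OF \<open>i < length nu\<close>] by auto
  ultimately show ?thesis
    by linarith
qed

lemma matched_cols_mono: "before nu i j \<Longrightarrow> matched_cols \<sigma> i \<subseteq> matched_cols \<sigma> j"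
  by (auto simp: matched_cols_def intro: before_trans)

lemma matched_cols_upd: "\<not> before nu i j \<Longrightarrow> matched_cols (\<sigma>(i := c)) j = matched_cols \<sigma> j"
  by (auto simp: matched_cols_def)

lemma choices_upd: "\<not> before nu i j \<Longrightarrow> choices (\<sigma>(i := c)) j = choices \<sigma> j"
  by (simp add: choices_def forced_def free_cols_def matched_cols_upd)

lemma step_wt_upd:
  assumes "\<not> before nu i j"
  shows "step_wt (\<sigma>(i := c)) j = step_wt \<sigma> j"
  unfolding step_wt_def forced_def free_cols_def matched_cols_upd[OF assms] ..

lemma unmatched_unfree_cols_subset:
  assumes j: "j \<in> T" and earlier: "\<And>i. i \<in> T \<Longrightarrow> before nu i j \<Longrightarrow> \<rho> i \<in> choices \<rho> i"
    and "\<not> forced \<rho> j"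
  shows "S - matched_cols \<rho> j - free_cols \<rho> j \<subseteq> T - insert j {i \<in> T. before nu i j}"
proof
  fix b assume b: "b \<in> S - matched_cols \<rho> j - free_cols \<rho> j"
  then have "nu ! j \<le> nu ! b"
    by (auto simp: free_cols_def)
  then have "b \<in> T"
    using b j support_subset by (auto simp: mem_T_iff)
  moreover have "b \<noteq> j"
    using b \<open>\<not> forced \<rho> j\<close> by (auto simp: forced_def)
  moreover have "\<not> before nu b j"
  proof
    assume "before nu b j"
    then have "matched_cols \<rho> b \<subseteq> matched_cols \<rho> j" "\<rho> b \<in> matched_cols \<rho> j"
      using \<open>b \<in> T\<close> matched_cols_mono by (auto simp: matched_cols_def)
    moreover have "\<rho> b \<in> choices \<rho> b"
      using earlier \<open>b \<in> T\<close> \<open>before nu b j\<close> by simp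
    ultimately show False
      using b by (auto simp: choices_def forced_def split: if_splits)
  qed
  ultimately show "b \<in> T - insert j {i \<in> T. before nu i j}"
    by blast
qed

text \<open>The unmatched columns of \<open>S\<close> that are not free carry top balls processed after \<open>j\<close>;
  as \<open>card T \<le> card S\<close>, they cannot exhaust the unmatched columns.\<close>

lemma free_cols_nonempty:
  assumes j: "j \<in> T" and earlier: "\<And>i. i \<in> T \<Longrightarrow> before nu i j \<Longrightarrow> \<rho> i \<in> choices \<rho> i"
    and "\<not> forced \<rho> j"
  shows "free_cols \<rho> j \<noteq> {}"
proof -
  define D where "D = {i \<in> T. before nu i j}"
  let ?M = "matched_cols \<rho> j" and ?F = "free_cols \<rho> j"
  have "card (S - ?M - ?F) \<le> card (T - insert j D)"
    using unmatched_unfree_cols_subset[OF assms] finite_T by (intro card_mono) (auto simp: D_def)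
  also have "\<dots> = card T - Suc (card D)"
    using finite_T j by (subst card_Diff_subset) (auto simp: D_def before_irrefl)
  finally have "card (S - ?M - ?F) \<le> card T - Suc (card D)" .
  moreover have "card S - card D \<le> card (S - ?M)"
  proof -
    have "card ?M \<le> card D"
      unfolding matched_cols_def D_def using finite_T by (intro card_image_le) auto
    then show ?thesis
      using diff_card_le_card_Diff[of ?M S] finite_T by (auto simp: matched_cols_def)
  qed
  moreover have "card (S - ?M) - card ?F \<le> card (S - ?M - ?F)"
    using finite_S by (intro diff_card_le_card_Diff) (auto simp: free_cols_def intro: finite_subset)
  moreover have "card D < card T"
    using finite_T j before_irrefl[of nu j] by (intro psubset_card_mono) (auto simp: D_def)
  ultimately have "card ?F \<noteq> 0"
    using card_top_cols_le by linarith
  then show ?thesis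
    by auto
qed

lemma sum_step_wt_choices:
  assumes j: "j \<in> T" and earlier: "\<And>i. i \<in> T \<Longrightarrow> before nu i j \<Longrightarrow> \<rho> i \<in> choices \<rho> i"
  shows "(\<Sum>c\<in>choices \<rho> j. step_wt \<rho> j c) = 1"
proof (cases "forced \<rho> j")
  case False
  then have "free_cols \<rho> j \<noteq> {}"
    using free_cols_nonempty[OF j earlier] by blast
  moreover have "free_cols \<rho> j \<subseteq> {..<length nu}"
    using support_subset by (auto simp: free_cols_def)
  ultimately have "tvar ^ card (free_cols \<rho> j) \<noteq> 1"
    by (simp add: tvar_power_eq_1_iff finite_subset)
  moreover have "j < length nu" "j \<notin> free_cols \<rho> j"
    using j T_subset by (auto simp: free_cols_def)
  ultimately show ?thesis
    using False \<open>free_cols \<rho> j \<subseteq> {..<length nu}\<close>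
    by (simp add: choices_def step_wt_def sum_cyclic_geometric_weights)
qed (simp add: choices_def step_wt_def)

lemma sum_sequential_queues: "(\<Sum>\<sigma>\<in>sequential_queues. \<Prod>j\<in>T. step_wt \<sigma> j (\<sigma> j)) = 1"
  unfolding sequential_queues_def
proof (rule sum_prod_consistent_choices[where prec = "before nu"])
  show "transp_on T (before nu)" "asymp_on T (before nu)"
    by (auto simp: transp_on_def asymp_on_def before_def)
  show "choices \<rho> j \<subseteq> {..<length nu}" if "j \<in> T" for \<rho> j
    using that T_subset support_subset by (auto simp: choices_def free_cols_def)
  show "step_wt (\<rho>(i := c)) j = step_wt \<rho> j" if "\<not> before nu i j" for \<rho> i c j
    using that by (rule step_wt_upd)
qed (simp_all add: finite_T choices_upd sum_step_wt_choices)

lemma length_bottom_row [simp]: "length (bottom_row \<sigma>) = length nu"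
  by (simp add: bottom_row_def)

lemma nth_bottom_row:
  "b < length nu \<Longrightarrow> bottom_row \<sigma> ! b =
     (if b \<in> \<sigma> ` T then nu ! inv_into T \<sigma> b else if b \<in> S then 1 else 0)"
  by (simp add: bottom_row_def)

lemma bottom_row_at:
  assumes "inj_on \<sigma> T" "i \<in> T" "\<sigma> i < length nu"
  shows "bottom_row \<sigma> ! \<sigma> i = nu ! i"
  using assms by (simp add: nth_bottom_row)

context
  fixes \<sigma> assumes \<sigma>: "\<sigma> \<in> sequential_queues"
begin

lemma seq_PiE: "\<sigma> \<in> T \<rightarrow>\<^sub>E {..<length nu}"
  using \<sigma> by (simp add: sequential_queues_def consistent_choices_def)

lemma seq_choice: "j \<in> T \<Longrightarrow> \<sigma> j \<in> choices \<sigma> j"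
  using \<sigma> unfolding sequential_queues_def consistent_choices_def by blast

lemma seq_forced: "j \<in> T \<Longrightarrow> forced \<sigma> j \<Longrightarrow> \<sigma> j = j"
  using seq_choice[of j] by (simp add: choices_def)

lemma seq_free: "j \<in> T \<Longrightarrow> \<not> forced \<sigma> j \<Longrightarrow> \<sigma> j \<in> free_cols \<sigma> j"
  using seq_choice[of j] by (simp add: choices_def)

lemma seq_mem_S: "j \<in> T \<Longrightarrow> \<sigma> j \<in> S"
  using seq_forced[of j] seq_free[of j] by (cases "forced \<sigma> j") (auto simp: forced_def free_cols_def)

lemma seq_label_le: "j \<in> T \<Longrightarrow> nu ! \<sigma> j \<le> nu ! j"
  using seq_forced[of j] seq_free[of j] by (cases "forced \<sigma> j") (auto simp: free_cols_def)

lemma seq_fixed_iff_forced: "j \<in> T \<Longrightarrow> \<sigma> j = j \<longleftrightarrow> forced \<sigma> j"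
  using seq_forced[of j] seq_free[of j] by (cases "forced \<sigma> j") (auto simp: free_cols_def)

lemma seq_not_matched: "j \<in> T \<Longrightarrow> \<sigma> j \<notin> matched_cols \<sigma> j"
  using seq_forced[of j] seq_free[of j] by (cases "forced \<sigma> j") (auto simp: forced_def free_cols_def)

lemma seq_inj: "inj_on \<sigma> T"
proof (rule inj_onI, rule ccontr)
  have earlier_differ: "\<sigma> i \<noteq> \<sigma> i'" if "i \<in> T" "i' \<in> T" "before nu i i'" for i i'
  proof
    assume "\<sigma> i = \<sigma> i'"
    moreover have "\<sigma> i \<in> matched_cols \<sigma> i'"
      unfolding matched_cols_def using that by (intro imageI) simp
    ultimately show False
      using seq_not_matched[OF that(2)] by simp
  qed
  fix i i' assume "i \<in> T" "i' \<in> T" "\<sigma> i = \<sigma> i'" "i \<noteq> i'"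
  then show False
    using before_cases[of i i' nu] earlier_differ by metis
qed

lemma seq_less_length: "j \<in> T \<Longrightarrow> \<sigma> j < length nu"
  using seq_PiE by auto

lemma seq_covers_top_cols_in_S:
  assumes "b \<in> S" "b \<in> T"
  shows "b \<in> \<sigma> ` T"
proof (cases "forced \<sigma> b")
  case True
  then show ?thesis
    using seq_forced[OF assms(2)] assms(2) by (metis imageI)
next
  case False
  then have "b \<in> matched_cols \<sigma> b"
    using assms(1) by (simp add: forced_def)
  then show ?thesis
    by (auto simp: matched_cols_def)
qed

lemma supp_bottom_row: "supp (bottom_row \<sigma>) = S"
proof -
  have "0 < bottom_row \<sigma> ! b \<longleftrightarrow> b \<in> S" if "b < length nu" for b
  proof (cases "b \<in> \<sigma> ` T")
    case True
    then obtain i where "i \<in> T" "b = \<sigma> i"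
      by blast
    then show ?thesis
      using bottom_row_at[OF seq_inj] seq_less_length seq_mem_S by (auto simp: mem_T_iff)
  qed (use that in \<open>simp add: nth_bottom_row\<close>)
  then show ?thesis
    using support_subset by (auto simp: supp_def)
qed

lemma bottom_row_label_fibre:
  assumes "1 < x"
  shows "{b. b < length nu \<and> bottom_row \<sigma> ! b = x} = \<sigma> ` {i \<in> T. nu ! i = x}"
proof (intro equalityI subsetI)
  fix b assume b: "b \<in> {b. b < length nu \<and> bottom_row \<sigma> ! b = x}"
  then have "b \<in> \<sigma> ` T"
    using assms by (auto simp: nth_bottom_row split: if_splits)
  then show "b \<in> \<sigma> ` {i \<in> T. nu ! i = x}"
    using b bottom_row_at[OF seq_inj] seq_less_length by force
qed (auto simp: bottom_row_at[OF seq_inj] seq_less_length)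

lemma card_bottom_row_label:
  assumes "1 < x"
  shows "card {b. b < length nu \<and> bottom_row \<sigma> ! b = x} = card {i. i < length nu \<and> nu ! i = x}"
proof -
  have "{i \<in> T. nu ! i = x} = {i. i < length nu \<and> nu ! i = x}"
    using assms by (auto simp: mem_T_iff)
  moreover have "inj_on \<sigma> {i \<in> T. nu ! i = x}"
    using seq_inj by (rule inj_on_subset) auto
  ultimately show ?thesis
    by (simp add: bottom_row_label_fibre[OF assms] card_image)
qed

lemma bottom_row_zero_or_ge:
  assumes "b < length nu"
  shows "bottom_row \<sigma> ! b = 0 \<or> nu ! b \<le> bottom_row \<sigma> ! b"
proof (cases "b \<in> \<sigma> ` T")
  case True
  then obtain k where "k \<in> T" "b = \<sigma> k"
    by blast
  then show ?thesis
    using bottom_row_at[OF seq_inj] seq_less_length seq_label_le by simp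
next
  case False
  then have "b \<notin> S \<or> b \<notin> T"
    using seq_covers_top_cols_in_S by blast
  then show ?thesis
    using False assms by (auto simp: nth_bottom_row mem_T_iff)
qed

lemma valid_bottom_row: "valid_2lq nu (bottom_row \<sigma>)"
  unfolding valid_2lq_def
  using one_notin_top_row card_bottom_row_label bottom_row_zero_or_ge by simp

lemma seq_mem_queues: "\<sigma> \<in> queues nu (bottom_row \<sigma>)"
  unfolding queues_def
proof (intro CollectI conjI ballI impI)
  show "\<sigma> \<in> T \<rightarrow>\<^sub>E {..<length (bottom_row \<sigma>)}"
    using seq_PiE by simp
  show "inj_on \<sigma> T"
    by (rule seq_inj)
  show "bottom_row \<sigma> ! \<sigma> i = nu ! i" if "i \<in> T" for i
    using bottom_row_at[OF seq_inj that seq_less_length[OF that]] .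
  fix i assume i: "i \<in> T" and same_label: "nu ! i = bottom_row \<sigma> ! i"
  have "i \<in> \<sigma> ` T"
  proof (rule ccontr)
    assume "i \<notin> \<sigma> ` T"
    then have "bottom_row \<sigma> ! i \<le> 1"
      using i by (simp add: nth_bottom_row mem_T_iff)
    then show False
      using same_label top_label_ge_2[OF i] by simp
  qed
  then obtain k where k: "k \<in> T" "i = \<sigma> k"
    by blast
  then have "nu ! \<sigma> k = nu ! k"
    using same_label bottom_row_at[OF seq_inj] seq_less_length by simp
  then have "forced \<sigma> k"
    using seq_free[OF k(1)] by (auto simp: free_cols_def)
  then show "\<sigma> i = i"
    using k seq_forced by simp
qed

lemma free_balls_bottom_row:
  assumes j: "j \<in> T" and not_forced: "\<not> forced \<sigma> j"
  shows "free_balls nu (bottom_row \<sigma>) \<sigma> j = free_cols \<sigma> j"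
proof -
  have same_labels: "bottom_row \<sigma> ! b = nu ! j \<and> nu ! b = nu ! j"
    if b: "b \<in> S" "b \<notin> matched_cols \<sigma> j" and ge: "nu ! j \<le> nu ! b" for b
  proof -
    have "b \<in> T"
      using b ge top_label_ge_2[OF j] support_subset by (auto simp: mem_T_iff)
    then obtain k where k: "k \<in> T" "b = \<sigma> k"
      using seq_covers_top_cols_in_S b by blast
    have "k \<noteq> j"
      using seq_free[OF j not_forced] k ge by (auto simp: free_cols_def)
    moreover have "\<not> before nu k j"
      using b k by (auto simp: matched_cols_def)
    ultimately have "nu ! k \<le> nu ! j"
      using before_cases before_imp_le by blast
    then show ?thesis
      using k ge seq_label_le bottom_row_at[OF seq_inj] seq_less_length by fastforce
  qed
  have "b \<in> free_balls nu (bottom_row \<sigma>) \<sigma> j \<longleftrightarrow> b \<in> free_cols \<sigma> j" for b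
  proof -
    have "b < length nu \<and> 0 < bottom_row \<sigma> ! b \<longleftrightarrow> b \<in> S"
      using supp_bottom_row by (auto simp: supp_def)
    then show ?thesis
      unfolding free_balls_def free_cols_def matched_cols_def[symmetric]
      using same_labels by fastforce
  qed
  then show ?thesis
    by blast
qed

lemma queue_wt_bottom_row:
  "queue_wt 1 tvar nu (bottom_row \<sigma>) \<sigma> = (\<Prod>j\<in>T. step_wt \<sigma> j (\<sigma> j))"
proof -
  have "pair_wt 1 tvar nu (bottom_row \<sigma>) \<sigma> j = step_wt \<sigma> j (\<sigma> j)" if "j \<in> T" "\<not> forced \<sigma> j" for j
    using that by (simp add: pair_wt_def step_wt_def skipped_def free_balls_bottom_row)
  then have "queue_wt 1 tvar nu (bottom_row \<sigma>) \<sigma> = (\<Prod>j\<in>{j \<in> T. \<not> forced \<sigma> j}. step_wt \<sigma> j (\<sigma> j))"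
    unfolding queue_wt_def using seq_fixed_iff_forced by (intro prod.cong) auto
  also have "\<dots> = (\<Prod>j\<in>T. step_wt \<sigma> j (\<sigma> j))"
    using finite_T by (intro prod.mono_neutral_left) (auto simp: step_wt_def)
  finally show ?thesis .
qed

end

context
  fixes mu and \<sigma>
  assumes mu: "length mu = length nu" "supp mu = S" "valid_2lq nu mu"
    and \<sigma>: "\<sigma> \<in> queues nu mu"
begin

lemma queue_PiE: "\<sigma> \<in> T \<rightarrow>\<^sub>E {..<length nu}"
  and queue_inj: "inj_on \<sigma> T"
  and queue_label: "i \<in> T \<Longrightarrow> mu ! \<sigma> i = nu ! i"
  and queue_trivial: "i \<in> T \<Longrightarrow> nu ! i = mu ! i \<Longrightarrow> \<sigma> i = i"
  using \<sigma> mu(1) by (auto simp: queues_def)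

lemma queue_less_length: "i \<in> T \<Longrightarrow> \<sigma> i < length nu"
  using queue_PiE by auto

lemma mem_S_iff: "b \<in> S \<longleftrightarrow> b < length nu \<and> 0 < mu ! b"
  using mu(1,2) by (auto simp: supp_def)

lemma queue_mem_S: "j \<in> T \<Longrightarrow> \<sigma> j \<in> S"
  using queue_PiE queue_label top_label_ge_2 by (fastforce simp: mem_S_iff)

lemma queue_label_fibre:
  assumes "1 < c"
  shows "{b. b < length nu \<and> mu ! b = c} = \<sigma> ` {i \<in> T. nu ! i = c}"
proof (rule sym, rule card_subset_eq)
  show "\<sigma> ` {i \<in> T. nu ! i = c} \<subseteq> {b. b < length nu \<and> mu ! b = c}"
    using queue_PiE queue_label by auto
  have "{i \<in> T. nu ! i = c} = {i. i < length nu \<and> nu ! i = c}"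
    using assms by (auto simp: mem_T_iff)
  moreover have "inj_on \<sigma> {i \<in> T. nu ! i = c}"
    using queue_inj by (rule inj_on_subset) auto
  ultimately show "card (\<sigma> ` {i \<in> T. nu ! i = c}) = card {b. b < length nu \<and> mu ! b = c}"
    using mu(1,3) assms by (simp add: card_image valid_2lq_def)
qed simp

lemma queue_label_le: "b \<in> S \<Longrightarrow> nu ! b \<le> mu ! b"
  using mu(3) by (auto simp: valid_2lq_def mem_S_iff)

lemma queue_not_matched: "j \<in> T \<Longrightarrow> \<sigma> j \<notin> matched_cols \<sigma> j"
  using queue_inj before_irrefl by (auto simp: matched_cols_def inj_on_eq_iff)

lemma queue_forced:
  assumes j: "j \<in> T" and "forced \<sigma> j"
  shows "\<sigma> j = j"
proof -
  have "j \<in> S" "j \<notin> matched_cols \<sigma> j"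
    using assms(2) by (auto simp: forced_def)
  have "nu ! j = mu ! j"
  proof (rule ccontr)
    assume "nu ! j \<noteq> mu ! j"
    then have "nu ! j < mu ! j" "1 < mu ! j"
      using queue_label_le[OF \<open>j \<in> S\<close>] top_label_ge_2[OF j] by auto
    moreover have "j \<in> {b. b < length nu \<and> mu ! b = mu ! j}"
      using \<open>j \<in> S\<close> by (simp add: mem_S_iff)
    ultimately obtain k where "k \<in> T" "nu ! k = mu ! j" "j = \<sigma> k"
      using queue_label_fibre[of "mu ! j"] by blast
    then have "j \<in> matched_cols \<sigma> j"
      using \<open>nu ! j < mu ! j\<close> by (auto simp: matched_cols_def before_def)
    then show False
      using \<open>j \<notin> matched_cols \<sigma> j\<close> by simp
  qed
  then show ?thesis
    using queue_trivial[OF j] by simp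
qed

lemma queue_free:
  assumes j: "j \<in> T" and not_forced: "\<not> forced \<sigma> j"
  shows "\<sigma> j \<in> free_cols \<sigma> j"
proof -
  have "nu ! \<sigma> j < nu ! j"
  proof (rule ccontr)
    assume "\<not> nu ! \<sigma> j < nu ! j"
    then have "nu ! \<sigma> j = mu ! \<sigma> j"
      using queue_label_le[OF queue_mem_S[OF j]] queue_label[OF j] by simp
    moreover have "\<sigma> j \<in> T"
      using \<open>\<not> nu ! \<sigma> j < nu ! j\<close> queue_mem_S[OF j] support_subset top_label_ge_2[OF j]
      by (auto simp: mem_T_iff)
    ultimately have "\<sigma> j = j"
      using queue_trivial[of "\<sigma> j"] queue_inj j by (auto dest: inj_onD)
    then show False
      using not_forced queue_mem_S[OF j] queue_not_matched[OF j] by (simp add: forced_def)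
  qed
  then show ?thesis
    using queue_mem_S[OF j] queue_not_matched[OF j] by (simp add: free_cols_def)
qed

lemma queue_mem_sequential: "\<sigma> \<in> sequential_queues"
  using queue_PiE queue_forced queue_free
  by (auto simp: sequential_queues_def consistent_choices_def choices_def)

lemma queue_bottom_row: "bottom_row \<sigma> = mu"
proof (rule nth_equalityI)
  fix b assume "b < length (bottom_row \<sigma>)"
  then have b: "b < length nu"
    by simp
  show "bottom_row \<sigma> ! b = mu ! b"
  proof (cases "b \<in> \<sigma> ` T")
    case True
    then show ?thesis
      using bottom_row_at[OF queue_inj] queue_less_length queue_label by auto
  next
    case False
    have "\<not> 1 < mu ! b"
      using queue_label_fibre[of "mu ! b"] False b by auto
    then show ?thesis
      using False b by (auto simp: nth_bottom_row mem_S_iff)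
  qed
qed (simp add: mu(1))

end

lemma a_coef_q1_eq_sum_fibre:
  assumes "length mu = length nu" "supp mu = S"
  shows "a_coef_q1 nu mu = (\<Sum>\<sigma>\<in>{\<sigma> \<in> sequential_queues. bottom_row \<sigma> = mu}. \<Prod>j\<in>T. step_wt \<sigma> j (\<sigma> j))"
proof (cases "valid_2lq nu mu")
  case True
  then have "queues nu mu = {\<sigma> \<in> sequential_queues. bottom_row \<sigma> = mu}"
    using assms queue_mem_sequential queue_bottom_row seq_mem_queues by blast
  then show ?thesis
    using True by (auto simp: a_coef_q1_def a_coef_def queue_wt_bottom_row[symmetric] intro!: sum.cong)
next
  case False
  then have no_fibre: "{\<sigma> \<in> sequential_queues. bottom_row \<sigma> = mu} = {}"
    using valid_bottom_row by blast
  show ?thesis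
    unfolding a_coef_q1_def a_coef_def no_fibre using False by simp
qed

lemma sum_a_coef_q1:
  assumes "finite M" and "\<And>mu. mu \<in> M \<Longrightarrow> length mu = length nu \<and> supp mu = S"
    and "bottom_row ` sequential_queues \<subseteq> M"
  shows "(\<Sum>mu\<in>M. a_coef_q1 nu mu) = 1"
proof -
  have "finite sequential_queues"
    using finite_T by (simp add: sequential_queues_def finite_consistent_choices)
  then have "(\<Sum>mu\<in>M. a_coef_q1 nu mu) = (\<Sum>\<sigma>\<in>sequential_queues. \<Prod>j\<in>T. step_wt \<sigma> j (\<sigma> j))"
    using assms by (simp add: a_coef_q1_eq_sum_fibre sum.group)
  then show ?thesis
    using sum_sequential_queues by simp
qed

end

theorem lemma7p3:
  fixes lam nu :: "nat list" and S :: "nat set" and n :: nat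
  assumes "length lam = n"
    and "sorted_wrt (\<ge>) lam"
    and "nu \<in> rearrangements (map (\<lambda>x. if x = 1 then 0 else x) lam)"
    and "S \<subseteq> {..<n}"
    and "card S = card (supp lam)"
  shows "(\<Sum>mu\<in>{mu \<in> rearrangements lam. supp mu = S}. a_coef_q1 nu mu) = 1"
proof -
  \<comment> \<open>Only the multiset of parts of \<open>lam\<close> matters.\<close>
  have mset_nu: "mset nu = mset (map (\<lambda>x. if x = 1 then 0 else x) lam)"
    using assms(3) by (simp add: rearrangements_def)
  note count_nu = count_mset_collapse_ones[of lam, folded mset_nu]
  have length_nu: "length nu = n"
    using mset_eq_length[OF mset_nu] assms(1) by simp
  have "1 \<notin> set nu"
    using count_nu[of 1] by (simp flip: count_mset_0_iff)
  moreover have "card (top_cols nu) \<le> card S"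
    using count_nu[of 0] length_nu assms(1,5) by (simp add: top_cols_eq_supp card_supp)
  ultimately interpret queue_support nu S
    using assms(4) length_nu by unfold_locales simp_all
  show ?thesis
  proof (rule sum_a_coef_q1)
    show "finite {mu \<in> rearrangements lam. supp mu = S}"
      by (simp add: rearrangements_def flip: permutations_of_multiset_def)
    show "length mu = length nu \<and> supp mu = S" if "mu \<in> {mu \<in> rearrangements lam. supp mu = S}" for mu
      using that length_nu assms(1) by (auto simp: rearrangements_def dest: mset_eq_length)
    show "bottom_row ` sequential_queues \<subseteq> {mu \<in> rearrangements lam. supp mu = S}"
    proof (intro image_subsetI CollectI conjI)
      fix \<sigma> assume "\<sigma> \<in> sequential_queues"
      then show "supp (bottom_row \<sigma>) = S" "bottom_row \<sigma> \<in> rearrangements lam"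
        using assms(1,5) length_nu count_nu card_bottom_row_label
        by (auto simp: rearrangements_def supp_bottom_row count_mset_eq_card
            intro!: mset_eq_by_card_supp_and_large_counts)
    qed
  qed
qed

end
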